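(* Let $\mathbf{a},\mathbf{b}\in\mathbb{R}^n$ have strictly positive entries with $\|\mathbf{a}\|_1=\|\mathbf{b}\|_1=d$. Then the undirected bipartite product graph $G(\mathbf{a},\mathbf{b})$ is a $1/2$-expander, i.e. for every $\emptyset\subset S\subset V$, $$\frac{\delta(S)}{\min\{\operatorname{vol}(S),\operatorname{vol}(V\setminus S)\}}\ge\frac12.$$
   Context: $G(\mathbf{a},\mathbf{b})$ is the undirected weighted graph on vertex set $V=A\cup B$ with $A=\{1,\dots,n\}$, $B=\{n+1,\dots,2n\}$, in which vertex $i\in A$ and vertex $n+j\in B$ are joined by an edge of weight $\mathbf{a}(i)\mathbf{b}(j)/d$, and there are no other edges (so vertex $i\in A$ has degree $\mathbf{a}(i)$ and $n+j\in B$ has degree $\mathbf{b}(j)$). For a weighted undirected graph, $\delta(S)$ is the total weight of edges with exactly one endpoint in $S$ and $\operatorname{vol}(S)$ is the sum of weighted degrees of vertices in $S$. *)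

theory Defs
  imports "HOL-Analysis.Analysis"
begin

text \<open>Weighted undirected graphs on a finite vertex set V, given by a symmetric
  weight function w (w u v = weight of edge {u,v}, 0 if no edge).\<close>

definition wdeg :: "('v \<Rightarrow> 'v \<Rightarrow> real) \<Rightarrow> 'v set \<Rightarrow> 'v \<Rightarrow> real" where
  "wdeg w V v = (\<Sum>u\<in>V. w v u)"

definition vol :: "('v \<Rightarrow> 'v \<Rightarrow> real) \<Rightarrow> 'v set \<Rightarrow> 'v set \<Rightarrow> real" where
  "vol w V S = (\<Sum>v\<in>S. wdeg w V v)"

definition delta :: "('v \<Rightarrow> 'v \<Rightarrow> real) \<Rightarrow> 'v set \<Rightarrow> 'v set \<Rightarrow> real" where
  "delta w V S = (\<Sum>u\<in>S. \<Sum>v\<in>V - S. w u v)"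

text \<open>Bipartite product graph G(a,b): vertices A = {1..n}, B = {n+1..2n};
  i \<in> A and n+j \<in> B joined with weight a(i) b(j) / d; no other edges.
  Vectors a, b are indexed by {1..n}.\<close>

definition prod_vertices :: "nat \<Rightarrow> nat set" where
  "prod_vertices n = {1..2*n}"

definition prod_weight :: "nat \<Rightarrow> (nat \<Rightarrow> real) \<Rightarrow> (nat \<Rightarrow> real) \<Rightarrow> real \<Rightarrow> nat \<Rightarrow> nat \<Rightarrow> real" where
  "prod_weight n a b d u v =
     (if u \<in> {1..n} \<and> v \<in> {n+1..2*n} then a u * b (v - n) / d
      else if v \<in> {1..n} \<and> u \<in> {n+1..2*n} then a v * b (u - n) / d
      else 0)"

end

theory Submission
  imports Defs
begin

text \<open>If S carries mass p of the A-side and mass q of the B-side, then vol S = p + q,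
  vol (V - S) = 2d - p - q and \<delta>(S) = (p(d - q) + q(d - p))/d = (p + q) - 2pq/d.
  When p + q \<le> d, AM-GM gives 2pq/d \<le> (p + q)^2/(2d) \<le> (p + q)/2, so \<delta>(S) \<ge> vol S / 2;
  the case p + q \<ge> d is the same after passing to the complement, which replaces
  p, q by d - p, d - q and leaves \<delta> unchanged.\<close>

lemma cut_weight_lower_bound:
  fixes p q d :: real
  assumes "0 \<le> p + q" "p + q \<le> d"
  shows "d * (p + q) \<le> 2 * (p * (d - q) + q * (d - p))"
proof -
  have "4 * p * q \<le> (p + q)^2"
    using zero_le_power2[of "p - q"] by (simp add: power2_eq_square algebra_simps)
  also have "\<dots> \<le> d * (p + q)"
    using assms by (simp add: power2_eq_square mult_right_mono)
  finally show ?thesis by (simp add: algebra_simps)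
qed

lemma cut_ratio_ge_half:
  fixes p q d :: real
  assumes "0 \<le> p" "p \<le> d" "0 \<le> q" "q \<le> d"
    and min_pos: "0 < min (p + q) (2 * d - p - q)"
  shows "1/2 \<le> (p * (d - q) + q * (d - p)) / d / min (p + q) (2 * d - p - q)"
proof -
  have "d > 0" using assms by linarith
  have "d * min (p + q) (2 * d - p - q) \<le> 2 * (p * (d - q) + q * (d - p))"
  proof (cases "p + q \<le> d")
    case True
    then show ?thesis using cut_weight_lower_bound[of p q d] assms by auto
  next
    case False
    then show ?thesis using cut_weight_lower_bound[of "d - p" "d - q" d] assms
      by (auto simp: algebra_simps)
  qed
  then show ?thesis using \<open>d > 0\<close> min_pos by (simp add: field_simps)
qed

definition bipartite_product_weight ::
    "'v set \<Rightarrow> 'v set \<Rightarrow> ('v \<Rightarrow> real) \<Rightarrow> real \<Rightarrow> 'v \<Rightarrow> 'v \<Rightarrow> real" where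
  "bipartite_product_weight A B f d u v =
     f u * f v / d * (of_bool (u \<in> A \<and> v \<in> B) + of_bool (u \<in> B \<and> v \<in> A))"

lemma sum_sum_bipartite_product_weight:
  assumes "finite X" "finite Y"
  shows "(\<Sum>u\<in>X. \<Sum>v\<in>Y. bipartite_product_weight A B f d u v)
    = (sum f (X \<inter> A) * sum f (Y \<inter> B) + sum f (X \<inter> B) * sum f (Y \<inter> A)) / d"
proof -
  define g where "g C u = of_bool (u \<in> C) * f u" for C u
  have inter: "sum f (Z \<inter> C) = sum (g C) Z" if "finite Z" for Z C
    by (auto simp: g_def sum.inter_restrict[OF that] intro!: sum.cong)
  have "(\<Sum>u\<in>X. \<Sum>v\<in>Y. bipartite_product_weight A B f d u v)
      = ((\<Sum>u\<in>X. \<Sum>v\<in>Y. g A u * g B v) + (\<Sum>u\<in>X. \<Sum>v\<in>Y. g B u * g A v)) / d"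
    unfolding bipartite_product_weight_def sum.distrib[symmetric] sum_divide_distrib g_def
    by (intro sum.cong refl) (simp add: field_simps)
  also have "\<dots> = (sum (g A) X * sum (g B) Y + sum (g B) X * sum (g A) Y) / d"
    by (simp add: sum_product)
  finally show ?thesis
    by (simp only: inter assms)
qed

lemma sum_split_disjoint_cover:
  assumes "finite X" "X \<subseteq> A \<union> B" "A \<inter> B = {}"
  shows "sum f X = sum f (X \<inter> A) + sum f (X \<inter> B)"
proof -
  have "X - A = X \<inter> B" using assms by blast
  then show ?thesis using sum.Int_Diff[OF assms(1), of f A] by simp
qed

context
  fixes A B :: "'v set" and f :: "'v \<Rightarrow> real" and d :: real
  assumes finite: "finite A" "finite B" and disjoint: "A \<inter> B = {}"
    and mass_A: "sum f A = d" and mass_B: "sum f B = d"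
begin


lemma vol_bipartite_product_weight:
  assumes "d \<noteq> 0" "X \<subseteq> A \<union> B"
  shows "vol (bipartite_product_weight A B f d) (A \<union> B) X = sum f X"
proof -
  have "finite X" using assms finite finite_subset by blast
  then have "vol (bipartite_product_weight A B f d) (A \<union> B) X
      = (sum f (X \<inter> A) * d + sum f (X \<inter> B) * d) / d"
    unfolding vol_def wdeg_def using finite disjoint mass_A mass_B
    by (simp add: sum_sum_bipartite_product_weight Int_Un_distrib Int_commute)
  also have "\<dots> = sum f X"
    using assms \<open>finite X\<close> disjoint sum_split_disjoint_cover[of X A B f] by (simp add: field_simps)
  finally show ?thesis .
qed

lemma delta_bipartite_product_weight:
  assumes "S \<subseteq> A \<union> B"
  shows "delta (bipartite_product_weight A B f d) (A \<union> B) S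
    = (sum f (S \<inter> A) * (d - sum f (S \<inter> B)) + sum f (S \<inter> B) * (d - sum f (S \<inter> A))) / d"
proof -
  have "finite S" using assms finite finite_subset by blast
  have complement: "sum f ((A \<union> B - S) \<inter> C) = d - sum f (S \<inter> C)" if "C = A \<or> C = B" for C
  proof -
    have "(A \<union> B - S) \<inter> C = C - S \<inter> C" using that disjoint by blast
    then show ?thesis using that finite mass_A mass_B by (auto simp: sum_diff)
  qed
  show ?thesis
    unfolding delta_def using \<open>finite S\<close> finite
    by (simp add: sum_sum_bipartite_product_weight complement)
qed

theorem bipartite_product_weight_expander:
  assumes f_pos: "\<And>u. u \<in> A \<union> B \<Longrightarrow> f u > 0"
    and S_ne: "S \<noteq> {}" and S_sub: "S \<subset> A \<union> B"
  defines "w \<equiv> bipartite_product_weight A B f d"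
  shows "1/2 \<le> delta w (A \<union> B) S / min (vol w (A \<union> B) S) (vol w (A \<union> B) (A \<union> B - S))"
proof -
  let ?p = "sum f (S \<inter> A)" and ?q = "sum f (S \<inter> B)"
  have S_sub': "S \<subseteq> A \<union> B" and compl_ne: "A \<union> B - S \<noteq> {}" using S_sub by auto
  have mass_pos: "sum f X > 0" if "X \<subseteq> A \<union> B" "X \<noteq> {}" for X
    using that f_pos finite finite_subset[OF that(1)] by (intro sum_pos) auto
  have mass_total: "sum f (A \<union> B) = 2 * d"
    using finite disjoint mass_A mass_B by (simp add: sum.union_disjoint)
  then have "d > 0" using mass_pos[of "A \<union> B"] S_ne S_sub' by auto
  have "sum f (S \<inter> C) \<le> sum f C" if "C \<subseteq> A \<union> B" "finite C" for C
    using that f_pos by (intro sum_mono2) (auto simp: less_imp_le)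
  moreover have "0 \<le> sum f (S \<inter> C)" for C
    using f_pos S_sub' by (intro sum_nonneg) (auto simp: less_imp_le)
  ultimately have sides: "0 \<le> ?p" "?p \<le> d" "0 \<le> ?q" "?q \<le> d"
    using finite mass_A mass_B by (metis Un_upper1 Un_upper2)+
  have vol: "vol w (A \<union> B) X = sum f X" if "X \<subseteq> A \<union> B" for X
    unfolding w_def using vol_bipartite_product_weight \<open>d > 0\<close> that by simp
  have vol_S: "vol w (A \<union> B) S = ?p + ?q"
    using vol[OF S_sub'] sum_split_disjoint_cover[OF _ S_sub' disjoint] finite S_sub'
    by (simp add: finite_subset)
  have vol_complement: "vol w (A \<union> B) (A \<union> B - S) = 2 * d - ?p - ?q"
    using vol[of "A \<union> B - S"] sum_diff[of "A \<union> B" S f] finite S_sub' mass_total vol_S vol[OF S_sub']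
    by auto
  have "0 < min (?p + ?q) (2 * d - ?p - ?q)"
    using mass_pos[OF S_sub' S_ne] mass_pos[OF _ compl_ne] vol_S vol_complement
      vol[OF S_sub'] vol[of "A \<union> B - S"] by auto
  then show ?thesis
    using cut_ratio_ge_half[OF sides] delta_bipartite_product_weight[OF S_sub']
      vol_S vol_complement unfolding w_def by simp
qed

end

theorem lemma5p6:
  fixes n :: nat and a b :: "nat \<Rightarrow> real" and d :: real
  assumes a_pos: "\<forall>i\<in>{1..n}. a i > 0"
    and b_pos: "\<forall>i\<in>{1..n}. b i > 0"
    and a_norm: "(\<Sum>i=1..n. \<bar>a i\<bar>) = d"
    and b_norm: "(\<Sum>i=1..n. \<bar>b i\<bar>) = d"
    and S_ne: "S \<noteq> {}"
    and S_sub: "S \<subset> prod_vertices n"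
  shows "delta (prod_weight n a b d) (prod_vertices n) S
           / min (vol (prod_weight n a b d) (prod_vertices n) S)
                 (vol (prod_weight n a b d) (prod_vertices n) (prod_vertices n - S))
         \<ge> 1/2"
proof -
  define f where "f u = (if u \<le> n then a u else b (u - n))" for u
  have vertices: "prod_vertices n = {1..n} \<union> {n+1..2*n}"
    unfolding prod_vertices_def by auto
  have weight: "prod_weight n a b d = bipartite_product_weight {1..n} {n+1..2*n} f d"
    unfolding prod_weight_def bipartite_product_weight_def f_def by (intro ext) auto
  have mass_A: "sum f {1..n} = d"
    using a_norm a_pos by (simp add: f_def less_imp_le)
  have "sum f {n+1..2*n} = (\<Sum>i=1..n. b i)"
    using sum.shift_bounds_cl_nat_ivl[of "\<lambda>u. b (u - n)" 1 n n]
    by (simp add: f_def mult_2 add.commute)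
  then have mass_B: "sum f {n+1..2*n} = d"
    using b_norm b_pos by (simp add: less_imp_le)
  have f_pos: "f u > 0" if "u \<in> {1..n} \<union> {n+1..2*n}" for u
    using that a_pos b_pos unfolding f_def by (auto simp: le_diff_conv2)
  show ?thesis
    using bipartite_product_weight_expander[OF _ _ _ mass_A mass_B f_pos S_ne] S_sub
    unfolding vertices weight by auto
qed

end
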